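(* Let $p_i(n)=y_i(n)$ and let $q_i(n)\in\mathcal F(\mathcal O)$ be the unique functions satisfying $$\sum_{\ell=0}^N b_\alpha(\ell)v^\ell=\exp\Big(\frac12\sum_{n=0}^N\sum_{i=1}^s\alpha(h_i)q_i(n)v^n\Big)\ \text{in } \mathcal F(\mathcal O)\otimes\mathbb R[v]/\langle v^{N+1}\rangle\ \text{for all }\alpha\in\Delta.$$ Then $S=\{p_i(n),q_i(n):1\le i\le s,\ 0\le n\le N\}$ is a system of independent generators of the Poisson algebra $(\mathcal F(\mathcal O),\{-,-\}_R)$, and $$\{p_i(m),p_j(n)\}_R=\{q_i(m),q_j(n)\}_R=0,\qquad \{p_i(m),q_j(n)\}_R=\delta_{ij}\delta_{m+n,N}$$ for all $1\le i,j\le s$ and $0\le m,n\le N$.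
   Context: Let $\mathfrak g$ be a finite-dimensional split simple real Lie algebra of rank $s$, split Cartan subalgebra $\mathfrak h$, roots $\Phi$, positive roots $\Phi_+$, base $\Delta$; $\mathfrak g\subseteq\mathfrak{gl}(M)$ via a faithful representation of minimal dimension, trace $\mathrm{tr}$. $h_1,\dots,h_s$ is a $\mathrm{tr}(xy)$-orthonormal basis of $\mathfrak h$; $e_\alpha\in\mathfrak g_\alpha,f_\alpha\in\mathfrak g_{-\alpha}$ with $\mathrm{tr}(e_\alpha f_\alpha)=1$. $\mathfrak g_N=\mathfrak g\otimes\mathbb R[u]/\langle u^{N+1}\rangle$, $x(i)$ = image of $x\otimes u^i$, $[x(i),y(j)]=[x,y](i+j)$. $R$ is linear with $R(h_i(j))=0$, $R(e_\alpha(j))=\frac12e_\alpha(j)$, $R(f_\alpha(j))=-\frac12f_\alpha(j)$; $\mathfrak g_N^R=(\mathfrak g_N,[X,Y]_R=[RX,Y]+[X,RY])$; $G_N^R$ a connected Lie group with Lie algebra $\mathfrak g_N^R$ acting on $\mathfrak g_N$ by the coadjoint action transported through $\nu(x)=(x|-)_N$, $(x(i)|y(j))_N=\delta_{i+j,N}\mathrm{tr}(xy)$. $\mathcal O=\mathrm{Ad}^*_R(G_N^R)x'$, $x'=\sum_{\alpha\in\Delta}(e_\alpha(0)+f_\alpha(0))$, an open subset of the $2s(N+1)$-dimensional space $\mathrm{Span}\{h_i(k),e_\alpha(k)+f_\alpha(k):\alpha\in\Delta,0\le k\le N\}$; each $L\in\mathcal O$ is $L=\sum_k\big(\sum_i y_i(k)h_i(k)+\sum_{\alpha\in\Delta}b_\alpha(k)(e_\alpha(k)+f_\alpha(k))\big)$,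 defining coordinates $y_i(k),b_\alpha(k)$. $\mathcal F(\mathcal O)$ is the algebra of smooth real functions on $\mathcal O$, with Poisson bracket $\{-,-\}_R$ induced by the Lie–Poisson structure of $\mathfrak g_N^R$: $\{y_i(k),y_j(\ell)\}_R=\{b_\alpha(k),b_\beta(\ell)\}_R=0$, $\{y_i(k),b_\alpha(\ell)\}_R=\frac12\alpha(h_i)b_\alpha(k+\ell-N)$ ($b_\alpha(m)=0$ for $m<0$), extended by the Leibniz rule. "Independent" means the differentials are linearly independent; "generators" means the coordinate functions $y_i(k),b_\alpha(k)$ are functions of elements of $S$. *)

theory Defs
  imports "HOL-Analysis.Analysis" "HOL-Computational_Algebra.Formal_Power_Series"
begin

text \<open>Points of the ambient space Span{h_i(k), e_alpha(k)+f_alpha(k)}: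
  a pair (Y, B) with y_i(k) = Y $ ix k $ i and b_alpha(k) = B $ ix k $ alpha,
  where ix : {0..N} -> 'k is a fixed bijection and both the Cartan index i
  and the simple roots alpha in Delta are indexed by the finite type 'r (s = CARD('r)).\<close>

type_synonym ('r, 'k) pt = "(real^'r^'k) \<times> (real^'r^'k)"

text \<open>Smooth (C-infinity) real functions on a set: differentiable, and all partial
  derivatives are again smooth (coinductively, i.e. derivatives of all orders exist).\<close>
coinductive smooth_on :: "'a::euclidean_space set \<Rightarrow> ('a \<Rightarrow> real) \<Rightarrow> bool" for S where
  "f differentiable_on S \<Longrightarrow>
   (\<forall>e\<in>Basis. smooth_on S (\<lambda>x. frechet_derivative f (at x) e)) \<Longrightarrow> smooth_on S f"

definition dir_y :: "(nat \<Rightarrow> 'k) \<Rightarrow> 'r::finite \<Rightarrow> nat \<Rightarrow> ('r, 'k::finite) pt" where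
  "dir_y ix i k = (axis (ix k) (axis i 1), 0)"

definition dir_b :: "(nat \<Rightarrow> 'k) \<Rightarrow> 'r::finite \<Rightarrow> nat \<Rightarrow> ('r, 'k::finite) pt" where
  "dir_b ix a k = (0, axis (ix k) (axis a 1))"

definition ycoord :: "(nat \<Rightarrow> 'k) \<Rightarrow> 'r::finite \<Rightarrow> nat \<Rightarrow> ('r, 'k::finite) pt \<Rightarrow> real" where
  "ycoord ix i k x = fst x $ ix k $ i"

definition bcoord :: "(nat \<Rightarrow> 'k) \<Rightarrow> 'r::finite \<Rightarrow> nat \<Rightarrow> ('r, 'k::finite) pt \<Rightarrow> real" where
  "bcoord ix a k x = snd x $ ix k $ a"

definition pd :: "('a::euclidean_space \<Rightarrow> real) \<Rightarrow> 'a \<Rightarrow> 'a \<Rightarrow> real" where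
  "pd f d x = frechet_derivative f (at x) d"

text \<open>The Poisson bracket {-,-}_R on F(S): the Leibniz extension of
  {y_i(k), y_j(l)} = {b_a(k), b_b(l)} = 0,
  {y_i(k), b_a(l)} = 1/2 a(h_i) b_a(k+l-N)  (b_a(m) = 0 for m < 0),
  where A a i = a(h_i).\<close>
definition pbR :: "nat \<Rightarrow> (nat \<Rightarrow> 'k) \<Rightarrow> ('r \<Rightarrow> 'r \<Rightarrow> real)
    \<Rightarrow> (('r::finite, 'k::finite) pt \<Rightarrow> real) \<Rightarrow> (('r, 'k) pt \<Rightarrow> real) \<Rightarrow> ('r, 'k) pt \<Rightarrow> real" where
  "pbR N ix A f g x =
     (\<Sum>i\<in>UNIV. \<Sum>k\<le>N. \<Sum>a\<in>UNIV. \<Sum>l\<le>N.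
        (if N \<le> k + l then (1/2) * A a i * bcoord ix a (k + l - N) x else 0) *
        (pd f (dir_y ix i k) x * pd g (dir_b ix a l) x
         - pd f (dir_b ix a l) x * pd g (dir_y ix i k) x))"

definition fps_exponential :: "real fps \<Rightarrow> real fps" where
  "fps_exponential P =
     fps_const (exp (fps_nth P 0)) * fps_compose (fps_exp 1) (P - fps_const (fps_nth P 0))"

end

theory Submission imports Defs begin

(* Write Q_a = 1/2 sum_n sum_i a(h_i) q_i(n) v^n, so that b_a = exp Q_a as truncated series.
   Differentiating in a direction w gives db_a(w) = dQ_a(w) * b_a, and since b_a(0) = exp(...) is
   nonzero this determines dQ_a(w), hence (A being invertible) every dq_i(n)(w), from the
   b-components of w alone.  Thus the q's have vanishing y-derivatives, which gives
   {q_i(m), q_j(n)} = 0; and the Hamiltonian field of y_i(m) moves b_a by the monomial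
   -1/2 a(h_i) v^(N-m) times b_a, which gives {y_i(m), q_j(n)} = delta_ij delta_(m+n,N).
   Such canonical relations force independence: evaluating a vanishing combination of
   differentials at the Hamiltonian field of the dual coordinate isolates one coefficient.
   Finally the inverse map (y, q) -> (y, exp Q) is built from linear forms by sums, products and
   exp, hence smooth. *)

notation fps_nth (infixl "$$" 75)

section \<open>Exponentials of formal power series\<close>

lemma fps_exponential_nth_0 [simp]: "fps_exponential P $$ 0 = exp (P $$ 0)"
  by (simp add: fps_exponential_def)

lemma fps_deriv_fps_exponential:
  "fps_deriv (fps_exponential P) = fps_deriv P * fps_exponential P"
proof -
  have "(P - fps_const (P $$ 0)) $$ 0 = 0" by simp
  then show ?thesis
    by (simp add: fps_exponential_def fps_compose_deriv mult_ac)
qed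

(* Coefficient l of (D E)' = D' E + P' (D E), where E = exp P. *)
lemma fps_mult_fps_exponential_nth_Suc:
  "of_nat (Suc l) * (D * fps_exponential P) $$ Suc l
     = (\<Sum>k\<le>l. of_nat (Suc k) * (D $$ Suc k * fps_exponential P $$ (l - k)
                                  + P $$ Suc k * (D * fps_exponential P) $$ (l - k)))"
proof -
  have "fps_deriv (D * fps_exponential P)
          = fps_deriv D * fps_exponential P + fps_deriv P * (D * fps_exponential P)"
    by (simp add: fps_deriv_fps_exponential algebra_simps)
  from arg_cong[OF this, of "\<lambda>F. F $$ l"] show ?thesis
    unfolding fps_add_nth fps_mult_nth[of "fps_deriv _"] fps_deriv_nth
    by (simp add: atLeast0AtMost sum.distrib algebra_simps)
qed

lemma fps_exponential_nth_Suc: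
  "of_nat (Suc l) * fps_exponential P $$ Suc l
     = (\<Sum>k\<le>l. of_nat (Suc k) * P $$ Suc k * fps_exponential P $$ (l - k))"
  using fps_mult_fps_exponential_nth_Suc[of l 1 P] by (simp add: mult.assoc)

lemma fps_mult_nth_cancel_right:
  fixes G H B :: "'a::field fps"
  assumes "B $$ 0 \<noteq> 0" and "\<And>l. l \<le> n \<Longrightarrow> (G * B) $$ l = (H * B) $$ l"
  shows "G $$ n = H $$ n"
proof -
  have "(G * B * inverse B) $$ n = (H * B * inverse B) $$ n"
    unfolding fps_mult_nth[of "_ * B"] using assms(2) by (intro sum.cong) auto
  then show ?thesis
    using inverse_mult_eq_1'[OF assms(1)] by (simp add: mult.assoc)
qed

lemma has_derivative_fps_exponential_nth:
  assumes "\<And>n. ((\<lambda>y. c y $$ n) has_derivative dc n) (at x within S)"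
  shows "((\<lambda>y. fps_exponential (c y) $$ l) has_derivative
           (\<lambda>v. (Abs_fps (\<lambda>n. dc n v) * fps_exponential (c x)) $$ l)) (at x within S)"
proof (induction l rule: less_induct)
  case (less l)
  show ?case
  proof (cases l)
    case 0
    show ?thesis
      using has_derivative_exp[OF assms[of 0]] by (simp add: 0 mult.commute)
  next
    case (Suc l')
    let ?E = "\<lambda>y. fps_exponential (c y)" and ?dC = "\<lambda>v. Abs_fps (\<lambda>n. dc n v)"
    have "((\<lambda>y. inverse (of_nat (Suc l')) *
              (\<Sum>k\<le>l'. of_nat (Suc k) * c y $$ Suc k * ?E y $$ (l' - k))) has_derivative
          (\<lambda>v. inverse (of_nat (Suc l')) *
              (\<Sum>k\<le>l'. of_nat (Suc k) * (dc (Suc k) v * ?E x $$ (l' - k)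
                                      + c x $$ Suc k * (?dC v * ?E x) $$ (l' - k)))))
          (at x within S)"
      using Suc by (auto intro!: derivative_eq_intros assms less.IH simp: algebra_simps)
    moreover have "?E y $$ l = inverse (of_nat (Suc l')) *
        (\<Sum>k\<le>l'. of_nat (Suc k) * c y $$ Suc k * ?E y $$ (l' - k))" for y
      using fps_exponential_nth_Suc[of l' "c y"] by (simp add: Suc field_simps del: of_nat_Suc)
    moreover have "(?dC v * ?E x) $$ l = inverse (of_nat (Suc l')) *
        (\<Sum>k\<le>l'. of_nat (Suc k) * (dc (Suc k) v * ?E x $$ (l' - k)
                                + c x $$ Suc k * (?dC v * ?E x) $$ (l' - k)))" for v
      using fps_mult_fps_exponential_nth_Suc[of l' "?dC v" "c x"]
      by (simp add: Suc field_simps del: of_nat_Suc)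
    ultimately show ?thesis by simp
  qed
qed

section \<open>Smoothness of exponential-polynomial functions\<close>

inductive_set exp_algebra :: "('a::euclidean_space \<Rightarrow> real) set" where
  linear: "bounded_linear f \<Longrightarrow> f \<in> exp_algebra"
| const: "(\<lambda>x. c) \<in> exp_algebra"
| add: "f \<in> exp_algebra \<Longrightarrow> g \<in> exp_algebra \<Longrightarrow> (\<lambda>x. f x + g x) \<in> exp_algebra"
| mult: "f \<in> exp_algebra \<Longrightarrow> g \<in> exp_algebra \<Longrightarrow> (\<lambda>x. f x * g x) \<in> exp_algebra"
| exp: "f \<in> exp_algebra \<Longrightarrow> (\<lambda>x. exp (f x)) \<in> exp_algebra"

lemma exp_algebra_sum:
  "(\<And>i. i \<in> I \<Longrightarrow> f i \<in> exp_algebra) \<Longrightarrow> (\<lambda>x. \<Sum>i\<in>I. f i x) \<in> exp_algebra"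
  by (induction I rule: infinite_finite_induct) (auto intro: exp_algebra.intros)

lemma exp_algebra_cmult: "f \<in> exp_algebra \<Longrightarrow> (\<lambda>x. c * f x) \<in> exp_algebra"
  by (rule exp_algebra.mult[OF exp_algebra.const])

lemma exp_algebra_has_derivative:
  assumes "f \<in> exp_algebra"
  obtains D where "\<And>x. (f has_derivative D x) (at x)" and "\<And>v. (\<lambda>x. D x v) \<in> exp_algebra"
proof -
  have "\<exists>D. (\<forall>x. (f has_derivative D x) (at x)) \<and> (\<forall>v. (\<lambda>x. D x v) \<in> exp_algebra)"
    using assms
  proof induction
    case (linear f)
    then show ?case
      by (intro exI[of _ "\<lambda>x. f"]) (auto intro: bounded_linear_imp_has_derivative exp_algebra.const)
  next
    case (const c)
    then show ?case by (intro exI[of _ "\<lambda>x v. 0"]) (auto intro: exp_algebra.const)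
  next
    case (add f g)
    then obtain Df Dg where "\<forall>x. (f has_derivative Df x) (at x)" "\<forall>v. (\<lambda>x. Df x v) \<in> exp_algebra"
      and "\<forall>x. (g has_derivative Dg x) (at x)" "\<forall>v. (\<lambda>x. Dg x v) \<in> exp_algebra" by blast
    then show ?case
      by (intro exI[of _ "\<lambda>x v. Df x v + Dg x v"]) (auto intro!: exp_algebra.add has_derivative_add)
  next
    case (mult f g)
    then obtain Df Dg where "\<forall>x. (f has_derivative Df x) (at x)" "\<forall>v. (\<lambda>x. Df x v) \<in> exp_algebra"
      and "\<forall>x. (g has_derivative Dg x) (at x)" "\<forall>v. (\<lambda>x. Dg x v) \<in> exp_algebra" by blast
    with mult.hyps show ?case
      by (intro exI[of _ "\<lambda>x v. f x * Dg x v + Df x v * g x"])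
        (auto intro!: exp_algebra.add exp_algebra.mult has_derivative_mult)
  next
    case (exp f)
    then obtain Df where "\<forall>x. (f has_derivative Df x) (at x)" "\<forall>v. (\<lambda>x. Df x v) \<in> exp_algebra"
      by blast
    with exp.hyps show ?case
      by (intro exI[of _ "\<lambda>x v. Df x v * exp (f x)"])
        (auto intro!: exp_algebra.exp exp_algebra.mult has_derivative_exp)
  qed
  then show thesis using that by metis
qed

lemma smooth_on_exp_algebra: "f \<in> exp_algebra \<Longrightarrow> smooth_on UNIV f"
proof (coinduction arbitrary: f rule: smooth_on.coinduct)
  case (smooth_on f)
  obtain D where D: "\<And>x. (f has_derivative D x) (at x)" "\<And>v. (\<lambda>x. D x v) \<in> exp_algebra"
    using exp_algebra_has_derivative[OF smooth_on] by metis
  then have "frechet_derivative f (at x) = D x" for x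
    by (metis frechet_derivative_at)
  with D show ?case
    by (auto simp: differentiable_on_def differentiable_def)
qed

lemma fps_exponential_nth_in_exp_algebra:
  assumes "\<And>n. (\<lambda>x. c x $$ n) \<in> exp_algebra"
  shows "(\<lambda>x. fps_exponential (c x) $$ l) \<in> exp_algebra"
proof (induction l rule: less_induct)
  case (less l)
  show ?case
  proof (cases l)
    case 0
    then show ?thesis by (simp add: exp_algebra.exp assms)
  next
    case (Suc l')
    have "fps_exponential (c x) $$ l = inverse (of_nat (Suc l')) *
        (\<Sum>k\<le>l'. of_nat (Suc k) * c x $$ Suc k * fps_exponential (c x) $$ (l' - k))" for x
      using fps_exponential_nth_Suc[of l' "c x"] by (simp add: Suc field_simps del: of_nat_Suc)
    moreover have "(\<lambda>x. inverse (of_nat (Suc l')) *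
        (\<Sum>k\<le>l'. of_nat (Suc k) * c x $$ Suc k * fps_exponential (c x) $$ (l' - k))) \<in> exp_algebra"
      using Suc by (intro exp_algebra_cmult exp_algebra_sum exp_algebra.mult assms less.IH) auto
    ultimately show ?thesis by simp
  qed
qed

section \<open>Coordinates and the bracket\<close>

lemma bounded_linear_ycoord: "bounded_linear (ycoord ix i k)"
  unfolding ycoord_def
  by (intro bounded_linear_compose[OF bounded_linear_vec_nth] bounded_linear_fst)

lemma bounded_linear_bcoord: "bounded_linear (bcoord ix i k)"
  unfolding bcoord_def
  by (intro bounded_linear_compose[OF bounded_linear_vec_nth] bounded_linear_snd)

lemma frechet_derivative_ycoord [simp]: "frechet_derivative (ycoord ix i k) (at x) = ycoord ix i k"
  by (metis bounded_linear_imp_has_derivative bounded_linear_ycoord frechet_derivative_at)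

lemma ycoord_dir_y: "ycoord ix i k (dir_y ix j m) = (if ix k = ix m \<and> i = j then 1 else 0)"
  by (simp add: ycoord_def dir_y_def axis_def)

lemma ycoord_dir_b [simp]: "ycoord ix i k (dir_b ix j m) = 0"
  by (simp add: ycoord_def dir_b_def)

lemma bcoord_dir_y [simp]: "bcoord ix i k (dir_y ix j m) = 0"
  by (simp add: bcoord_def dir_y_def)

lemma bcoord_dir_b: "bcoord ix i k (dir_b ix j m) = (if ix k = ix m \<and> i = j then 1 else 0)"
  by (simp add: bcoord_def dir_b_def axis_def)

lemma pbR_antisym: "pbR N ix A f g x = - pbR N ix A g f x"
  unfolding pbR_def by (simp add: sum_negf[symmetric] algebra_simps)

lemma pbR_ycoord_ycoord: "pbR N ix A (ycoord ix i m) (ycoord ix j n) x = 0"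
  by (simp add: pbR_def pd_def)

definition hamiltonian_field :: "nat \<Rightarrow> (nat \<Rightarrow> 'k) \<Rightarrow> ('r \<Rightarrow> 'r \<Rightarrow> real)
    \<Rightarrow> ('r::finite, 'k::finite) pt \<Rightarrow> (('r, 'k) pt \<Rightarrow> real) \<Rightarrow> ('r, 'k) pt" where
  "hamiltonian_field N ix A x dg = (\<Sum>i\<in>UNIV. \<Sum>k\<le>N. \<Sum>a\<in>UNIV. \<Sum>l\<le>N.
      (if N \<le> k + l then (1/2) * A a i * bcoord ix a (k + l - N) x else 0) *\<^sub>R
      (dg (dir_b ix a l) *\<^sub>R dir_y ix i k - dg (dir_y ix i k) *\<^sub>R dir_b ix a l))"

lemma pbR_eq_hamiltonian_field:
  assumes "linear (frechet_derivative f (at x))"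
  shows "pbR N ix A f g x
           = frechet_derivative f (at x) (hamiltonian_field N ix A x (frechet_derivative g (at x)))"
  unfolding pbR_def hamiltonian_field_def pd_def
  by (simp add: linear_sum[OF assms] linear_scale[OF assms] linear_diff[OF assms] algebra_simps)

lemma sum_sum_delta:
  assumes "finite I" "finite K" "i \<in> I" "n \<in> K"
  shows "(\<Sum>i'\<in>I. \<Sum>n'\<in>K. if i' = i \<and> n' = n then T i' n' else 0) = T i n"
proof -
  have "(\<Sum>n'\<in>K. if i' = i \<and> n' = n then T i' n' else 0) = (if i' = i then T i n else 0)" for i'
    using assms by (cases "i' = i") auto
  with assms show ?thesis by simp
qed

lemma pbR_dual_families_independent:
  fixes f g :: "'i \<Rightarrow> 'n \<Rightarrow> ('r::finite, 'k::finite) pt \<Rightarrow> real"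
  assumes "finite I" "finite K"
    and linear: "\<And>i n. i \<in> I \<Longrightarrow> n \<in> K \<Longrightarrow>
        linear (frechet_derivative (f i n) (at x)) \<and> linear (frechet_derivative (g i n) (at x))"
    and dual_f: "\<And>i n. i \<in> I \<Longrightarrow> n \<in> K \<Longrightarrow> \<exists>h. \<forall>i'\<in>I. \<forall>n'\<in>K.
        pbR N ix A (f i' n') h x = (if i' = i \<and> n' = n then 1 else 0) \<and> pbR N ix A (g i' n') h x = 0"
    and dual_g: "\<And>i n. i \<in> I \<Longrightarrow> n \<in> K \<Longrightarrow> \<exists>h. \<forall>i'\<in>I. \<forall>n'\<in>K.
        pbR N ix A h (f i' n') x = 0 \<and> pbR N ix A h (g i' n') x = (if i' = i \<and> n' = n then 1 else 0)"
    and zero: "\<forall>v. (\<Sum>i\<in>I. \<Sum>n\<in>K. c i n * frechet_derivative (f i n) (at x) v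
                                 + d i n * frechet_derivative (g i n) (at x) v) = 0"
    and "i \<in> I" "n \<in> K"
  shows "c i n = 0 \<and> d i n = 0"
proof
  obtain h where h: "\<forall>i'\<in>I. \<forall>n'\<in>K.
      pbR N ix A (f i' n') h x = (if i' = i \<and> n' = n then 1 else 0) \<and> pbR N ix A (g i' n') h x = 0"
    using dual_f \<open>i \<in> I\<close> \<open>n \<in> K\<close> by blast
  let ?v = "hamiltonian_field N ix A x (frechet_derivative h (at x))"
  have "(\<Sum>i'\<in>I. \<Sum>n'\<in>K. c i' n' * frechet_derivative (f i' n') (at x) ?v
                                + d i' n' * frechet_derivative (g i' n') (at x) ?v)
      = (\<Sum>i'\<in>I. \<Sum>n'\<in>K. if i' = i \<and> n' = n then c i' n' else 0)"
    using h linear by (intro sum.cong refl) (simp add: pbR_eq_hamiltonian_field)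
  then show "c i n = 0"
    using zero assms by (simp add: sum_sum_delta)
next
  obtain h where h: "\<forall>i'\<in>I. \<forall>n'\<in>K.
      pbR N ix A h (f i' n') x = 0 \<and> pbR N ix A h (g i' n') x = (if i' = i \<and> n' = n then 1 else 0)"
    using dual_g \<open>i \<in> I\<close> \<open>n \<in> K\<close> by blast
  let ?v = "hamiltonian_field N ix A x (frechet_derivative h (at x))"
  have "pbR N ix A (f i' n') h x = 0 \<and> pbR N ix A (g i' n') h x = - (if i' = i \<and> n' = n then 1 else 0)"
    if "i' \<in> I" "n' \<in> K" for i' n'
    using h[rule_format, OF that] pbR_antisym[of N ix A h _ x] by simp
  then have "(\<Sum>i'\<in>I. \<Sum>n'\<in>K. c i' n' * frechet_derivative (f i' n') (at x) ?v
                                + d i' n' * frechet_derivative (g i' n') (at x) ?v)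
      = (\<Sum>i'\<in>I. \<Sum>n'\<in>K. if i' = i \<and> n' = n then - d i' n' else 0)"
    using linear by (intro sum.cong refl) (auto simp: pbR_eq_hamiltonian_field)
  then show "d i n = 0"
    using zero assms by (simp add: sum_sum_delta)
qed

lemma hamiltonian_field_ycoord:
  assumes "inj_on ix {..N}" "m \<le> N"
  shows "hamiltonian_field N ix A x (ycoord ix i m)
    = - (\<Sum>a\<in>UNIV. \<Sum>l\<le>N.
           (if N \<le> m + l then (1/2) * A a i * bcoord ix a (m + l - N) x else 0) *\<^sub>R dir_b ix a l)"
    (is "_ = - ?W")
proof -
  have "hamiltonian_field N ix A x (ycoord ix i m) = (\<Sum>i'\<in>UNIV. \<Sum>k\<le>N. if i' = i \<and> k = m then - ?W else 0)"
    unfolding hamiltonian_field_def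
  proof (intro sum.cong refl)
    fix i' k
    assume "k \<in> {..N}"
    then have "ycoord ix i m (dir_y ix i' k) = (if i' = i \<and> k = m then 1 else 0)"
      using assms by (auto simp: ycoord_dir_y inj_on_eq_iff)
    then show "(\<Sum>a\<in>UNIV. \<Sum>l\<le>N.
        (if N \<le> k + l then 1 / 2 * A a i' * bcoord ix a (k + l - N) x else 0) *\<^sub>R
        (ycoord ix i m (dir_b ix a l) *\<^sub>R dir_y ix i' k - ycoord ix i m (dir_y ix i' k) *\<^sub>R dir_b ix a l))
      = (if i' = i \<and> k = m then - ?W else 0)"
      by (auto simp: sum_negf)
  qed
  also have "\<dots> = - ?W"
    using assms by (simp add: sum_sum_delta)
  finally show ?thesis .
qed

lemma bcoord_sum_dir_b:
  assumes "inj_on ix {..N}" "l \<le> N"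
  shows "bcoord ix a l (\<Sum>a'\<in>UNIV. \<Sum>l'\<le>N. T a' l' *\<^sub>R dir_b ix a' l') = T a l"
proof -
  have lin: "linear (bcoord ix a l)"
    by (rule bounded_linear.linear[OF bounded_linear_bcoord])
  have "bcoord ix a l (\<Sum>a'\<in>UNIV. \<Sum>l'\<le>N. T a' l' *\<^sub>R dir_b ix a' l')
      = (\<Sum>a'\<in>UNIV. \<Sum>l'\<le>N. if a' = a \<and> l' = l then T a' l' else 0)"
    unfolding linear_sum[OF lin] linear_scale[OF lin]
    using assms by (intro sum.cong refl) (auto simp: bcoord_dir_b inj_on_eq_iff)
  also have "\<dots> = T a l"
    using assms by (simp add: sum_sum_delta)
  finally show ?thesis .
qed

section \<open>Exponential coordinates\<close>

lemma invertible_sum_mult_cancel: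
  fixes A :: "'r::finite \<Rightarrow> 'r \<Rightarrow> real"
  assumes "invertible (\<chi> a i. A a i :: real^'r^'r)"
    and "\<And>a. (\<Sum>i\<in>UNIV. A a i * u i) = (\<Sum>i\<in>UNIV. A a i * v i)"
  shows "u = v"
proof -
  have "inj ((*v) (\<chi> a i. A a i :: real^'r^'r))"
    using assms(1) matrix_left_invertible_injective unfolding invertible_def by blast
  moreover have "(\<chi> a i. A a i) *v (\<chi> i. u i) = (\<chi> a i. A a i) *v (\<chi> i. v i)"
    using assms(2) by (simp add: vec_eq_iff matrix_vector_mult_def)
  ultimately have "(\<chi> i. u i) = (\<chi> i. v i :: real^'r)"
    by (rule injD)
  then show ?thesis
    by (simp add: vec_eq_iff fun_eq_iff)
qed

definition pairing_series :: "nat \<Rightarrow> ('r::finite \<Rightarrow> 'r \<Rightarrow> real) \<Rightarrow> ('r \<Rightarrow> nat \<Rightarrow> real) \<Rightarrow> 'r \<Rightarrow> real fps" where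
  "pairing_series N A t a = Abs_fps (\<lambda>n. if n \<le> N then (1/2) * (\<Sum>i\<in>UNIV. A a i * t i n) else 0)"

lemma pairing_series_0 [simp]: "pairing_series N A (\<lambda>i n. 0) a = 0"
  by (intro fps_ext) (simp add: pairing_series_def)

lemma pairing_series_delta:
  assumes "m \<le> N"
  shows "pairing_series N A (\<lambda>j n. if j = i \<and> n = m then c else 0) a = fps_const (c * A a i / 2) * fps_X ^ m"
  using assms by (intro fps_ext) (auto simp: pairing_series_def fps_X_power_mult_nth if_distrib cong: if_cong)

lemma pairing_series_cong:
  "(\<And>i n. n \<le> N \<Longrightarrow> t i n = t' i n) \<Longrightarrow> pairing_series N A t a = pairing_series N A t' a"
  unfolding pairing_series_def by (rule arg_cong[where f = Abs_fps]) (auto simp: fun_eq_iff)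

(* The q-coordinates of the argument sit in the b-slot of a point, as in the theorem. *)
definition exp_chart :: "nat \<Rightarrow> (nat \<Rightarrow> 'k) \<Rightarrow> ('r \<Rightarrow> 'r \<Rightarrow> real)
    \<Rightarrow> ('r::finite, 'k::finite) pt \<Rightarrow> ('r, 'k) pt" where
  "exp_chart N ix A z = (fst z, \<chi> k a.
     fps_exponential (pairing_series N A (\<lambda>i n. snd z $ ix n $ i) a) $$ inv_into {..N} ix k)"

lemma smooth_on_ycoord_exp_chart: "smooth_on UNIV (ycoord ix i k \<circ> exp_chart N ix A)"
proof -
  have "ycoord ix i k \<circ> exp_chart N ix A = ycoord ix i k"
    by (simp add: fun_eq_iff exp_chart_def ycoord_def)
  then show ?thesis
    using smooth_on_exp_algebra[OF exp_algebra.linear[OF bounded_linear_ycoord]] by simp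
qed

lemma smooth_on_bcoord_exp_chart:
  fixes ix :: "nat \<Rightarrow> 'k::finite" and A :: "'r::finite \<Rightarrow> 'r \<Rightarrow> real"
  shows "smooth_on UNIV (bcoord ix a k \<circ> exp_chart N ix A)"
proof -
  have "(\<lambda>z. (1/2) * (\<Sum>i\<in>UNIV. A a i * bcoord ix i n z)) \<in> exp_algebra" for n
    by (intro exp_algebra_cmult exp_algebra_sum exp_algebra.linear bounded_linear_bcoord)
  then have "(\<lambda>z :: ('r, 'k) pt. pairing_series N A (\<lambda>i n. snd z $ ix n $ i) a $$ n) \<in> exp_algebra"
    for n
    by (cases "n \<le> N") (auto simp: pairing_series_def bcoord_def exp_algebra.const)
  from fps_exponential_nth_in_exp_algebra[OF this]
  have "bcoord ix a k \<circ> exp_chart N ix A \<in> exp_algebra"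
    by (simp add: o_def exp_chart_def bcoord_def)
  then show ?thesis
    by (rule smooth_on_exp_algebra)
qed

locale exp_coordinates =
  fixes N :: nat
    and ix :: "nat \<Rightarrow> 'k::finite"
    and A :: "'r::finite \<Rightarrow> 'r \<Rightarrow> real"
    and Orb :: "('r, 'k) pt set"
    and q :: "'r \<Rightarrow> nat \<Rightarrow> ('r, 'k) pt \<Rightarrow> real"
  assumes ix_bij: "bij_betw ix {..N} UNIV"
    and A_invertible: "invertible (\<chi> a i. A a i :: real^'r^'r)"
    and open_Orb: "open Orb"
    and q_differentiable: "\<And>i n. n \<le> N \<Longrightarrow> q i n differentiable_on Orb"
    and bcoord_eq_exponential: "\<And>a x l. x \<in> Orb \<Longrightarrow> l \<le> N \<Longrightarrow>
        bcoord ix a l x = fps_exponential (pairing_series N A (\<lambda>i n. q i n x) a) $$ l"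
begin

lemma ix_inj: "inj_on ix {..N}"
  using ix_bij by (simp add: bij_betw_def)

lemma q_has_derivative:
  assumes "x \<in> Orb" "n \<le> N"
  shows "(q i n has_derivative frechet_derivative (q i n) (at x)) (at x)"
  using q_differentiable[OF assms(2)] assms(1) open_Orb
  by (simp add: differentiable_on_eq_differentiable_at frechet_derivative_works[symmetric])

lemma linear_frechet_derivative_q:
  "x \<in> Orb \<Longrightarrow> n \<le> N \<Longrightarrow> linear (frechet_derivative (q i n) (at x))"
  using has_derivative_linear[OF q_has_derivative] .

lemma bcoord_eq_derivative_exponential:
  assumes "x \<in> Orb" "l \<le> N"
  shows "bcoord ix a l w = (pairing_series N A (\<lambda>i n. frechet_derivative (q i n) (at x) w) a
                             * fps_exponential (pairing_series N A (\<lambda>i n. q i n x) a)) $$ l"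
proof -
  let ?P = "\<lambda>y. pairing_series N A (\<lambda>i n. q i n y) a"
  let ?dP = "\<lambda>w. pairing_series N A (\<lambda>i n. frechet_derivative (q i n) (at x) w) a"
  have "((\<lambda>y. (1/2) * (\<Sum>i\<in>UNIV. A a i * q i n y)) has_derivative
          (\<lambda>w. (1/2) * (\<Sum>i\<in>UNIV. A a i * frechet_derivative (q i n) (at x) w))) (at x)"
    if "n \<le> N" for n
    using assms(1) that by (intro has_derivative_mult_right has_derivative_sum q_has_derivative)
  then have "((\<lambda>y. ?P y $$ n) has_derivative (\<lambda>w. ?dP w $$ n)) (at x)" for n
    by (cases "n \<le> N") (simp_all only: pairing_series_def fps_nth_Abs_fps if_True if_False has_derivative_const)
  from has_derivative_fps_exponential_nth[OF this]
  have "((\<lambda>y. fps_exponential (?P y) $$ l) has_derivative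
          (\<lambda>w. (?dP w * fps_exponential (?P x)) $$ l)) (at x)"
    by (simp add: fps_nth_inverse)
  then have "(bcoord ix a l has_derivative (\<lambda>w. (?dP w * fps_exponential (?P x)) $$ l)) (at x)"
    by (rule has_derivative_transform_within_open[OF _ open_Orb assms(1)])
      (simp add: bcoord_eq_exponential assms(2))
  moreover have "(bcoord ix a l has_derivative bcoord ix a l) (at x)"
    by (rule bounded_linear_imp_has_derivative[OF bounded_linear_bcoord])
  ultimately have "bcoord ix a l = (\<lambda>w. (?dP w * fps_exponential (?P x)) $$ l)"
    by (rule has_derivative_unique[rotated])
  then show ?thesis
    by (rule fun_cong)
qed

lemma frechet_derivative_q_eqI:
  assumes "x \<in> Orb" "n \<le> N"
    and "\<And>a l. l \<le> N \<Longrightarrow> bcoord ix a l w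
           = (pairing_series N A t a * fps_exponential (pairing_series N A (\<lambda>i n. q i n x) a)) $$ l"
  shows "frechet_derivative (q i n) (at x) w = t i n"
proof -
  have "pairing_series N A (\<lambda>i n. frechet_derivative (q i n) (at x) w) a $$ n = pairing_series N A t a $$ n"
    for a
  proof (rule fps_mult_nth_cancel_right)
    show "fps_exponential (pairing_series N A (\<lambda>i n. q i n x) a) $$ 0 \<noteq> 0"
      by simp
  qed (use assms in \<open>simp add: bcoord_eq_derivative_exponential[symmetric]\<close>)
  then have "(\<Sum>i\<in>UNIV. A a i * frechet_derivative (q i n) (at x) w) = (\<Sum>i\<in>UNIV. A a i * t i n)" for a
    using assms(2) by (simp add: pairing_series_def)
  from invertible_sum_mult_cancel[OF A_invertible this] show ?thesis
    by (rule fun_cong)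
qed

lemma frechet_derivative_q_dir_y:
  "x \<in> Orb \<Longrightarrow> n \<le> N \<Longrightarrow> frechet_derivative (q i n) (at x) (dir_y ix j k) = 0"
  by (rule frechet_derivative_q_eqI[where t = "\<lambda>i n. 0"]) simp_all

lemma pbR_ycoord_q:
  assumes "x \<in> Orb" "m \<le> N" "n \<le> N"
  shows "pbR N ix A (ycoord ix i m) (q j n) x = (if i = j \<and> m + n = N then 1 else 0)"
proof -
  have "frechet_derivative (q j n) (at x) (hamiltonian_field N ix A x (ycoord ix i m))
      = (if j = i \<and> n = N - m then - 1 else 0)"
  proof (rule frechet_derivative_q_eqI[OF assms(1,3)])
    fix a l
    assume "l \<le> N"
    let ?E = "fps_exponential (pairing_series N A (\<lambda>i n. q i n x) a)"
    have "bcoord ix a l (hamiltonian_field N ix A x (ycoord ix i m))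
        = - (if N \<le> m + l then (1/2) * A a i * bcoord ix a (m + l - N) x else 0)"
      using assms \<open>l \<le> N\<close> ix_inj
      by (simp add: hamiltonian_field_ycoord bcoord_sum_dir_b linear_neg[OF bounded_linear.linear[OF bounded_linear_bcoord]])
    also have "\<dots> = - (A a i / 2) * (if l < N - m then 0 else ?E $$ (l - (N - m)))"
      using assms \<open>l \<le> N\<close> by (auto simp: bcoord_eq_exponential add.commute)
    also have "\<dots> = (pairing_series N A (\<lambda>j n. if j = i \<and> n = N - m then - 1 else 0) a * ?E) $$ l"
      by (simp add: pairing_series_delta mult.assoc fps_X_power_mult_nth)
    finally show "bcoord ix a l (hamiltonian_field N ix A x (ycoord ix i m))
      = (pairing_series N A (\<lambda>j n. if j = i \<and> n = N - m then - 1 else 0) a * ?E) $$ l" .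
  qed
  then show ?thesis
    using assms pbR_antisym[of N ix A "ycoord ix i m"]
    by (auto simp: pbR_eq_hamiltonian_field linear_frechet_derivative_q)
qed

lemma pbR_q_q: "x \<in> Orb \<Longrightarrow> m \<le> N \<Longrightarrow> n \<le> N \<Longrightarrow> pbR N ix A (q i m) (q j n) x = 0"
  by (simp add: pbR_def pd_def frechet_derivative_q_dir_y)

lemma ycoord_q_independent:
  assumes "x \<in> Orb"
    and "\<forall>v. (\<Sum>i\<in>UNIV. \<Sum>n\<le>N. c i n * frechet_derivative (ycoord ix i n) (at x) v
                                + d i n * frechet_derivative (q i n) (at x) v) = 0"
    and "n \<le> N"
  shows "c i n = 0 \<and> d i n = 0"
proof (rule pbR_dual_families_independent[OF finite finite_atMost])
  fix i' :: 'r and n' :: nat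
  assume "i' \<in> UNIV" "n' \<in> {..N}"
  with assms(1) show "linear (frechet_derivative (ycoord ix i' n') (at x)) \<and> linear (frechet_derivative (q i' n') (at x))"
    by (simp add: linear_frechet_derivative_q bounded_linear.linear[OF bounded_linear_ycoord])
next
  fix i' :: 'r and n' :: nat
  assume "i' \<in> UNIV" "n' \<in> {..N}"
  show "\<exists>h. \<forall>i''\<in>UNIV. \<forall>n''\<in>{..N}.
      pbR N ix A (ycoord ix i'' n'') h x = (if i'' = i' \<and> n'' = n' then 1 else 0)
      \<and> pbR N ix A (q i'' n'') h x = 0"
    using assms(1) \<open>n' \<in> {..N}\<close> by (intro exI[of _ "q i' (N - n')"]) (auto simp: pbR_ycoord_q pbR_q_q)
next
  fix i' :: 'r and n' :: nat
  assume "i' \<in> UNIV" "n' \<in> {..N}"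
  show "\<exists>h. \<forall>i''\<in>UNIV. \<forall>n''\<in>{..N}.
      pbR N ix A h (ycoord ix i'' n'') x = 0
      \<and> pbR N ix A h (q i'' n'') x = (if i'' = i' \<and> n'' = n' then 1 else 0)"
    using assms(1) \<open>n' \<in> {..N}\<close> by (intro exI[of _ "ycoord ix i' (N - n')"]) (auto simp: pbR_ycoord_q pbR_ycoord_ycoord)
qed (use assms in auto)

lemma exp_chart_inverse:
  assumes "x \<in> Orb"
  shows "exp_chart N ix A (\<chi> k i. ycoord ix i (inv_into {..N} ix k) x, \<chi> k i. q i (inv_into {..N} ix k) x) = x"
proof -
  have ix_inv: "ix (inv_into {..N} ix k) = k" for k
    using ix_bij by (auto simp: bij_betw_def f_inv_into_f)
  have inv_le: "inv_into {..N} ix k \<le> N" for k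
    using ix_bij by (metis UNIV_I atMost_iff bij_betw_def inv_into_into)
  have inv_ix: "inv_into {..N} ix (ix n) = n" if "n \<le> N" for n
    using ix_inj that by (simp add: inv_into_f_f)
  have "pairing_series N A (\<lambda>i n. q i (inv_into {..N} ix (ix n)) x) a = pairing_series N A (\<lambda>i n. q i n x) a" for a
    by (rule pairing_series_cong) (simp add: inv_ix)
  then show ?thesis
    using assms inv_le
    by (simp add: exp_chart_def vec_eq_iff prod_eq_iff ycoord_def bcoord_eq_exponential[symmetric] bcoord_def ix_inv)
qed

end

theorem proposition4p2:
  fixes N :: nat
    and ix :: "nat \<Rightarrow> 'k::finite"
    and A :: "'r::finite \<Rightarrow> 'r \<Rightarrow> real"
    and Orb :: "('r, 'k) pt set"
    and q :: "'r \<Rightarrow> nat \<Rightarrow> ('r, 'k) pt \<Rightarrow> real"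
  assumes ix: "bij_betw ix {..N} UNIV"
    and A_inv: "invertible (\<chi> a i. A a i :: real^'r^'r)"
    and O_open: "open Orb"
    and O_conn: "connected Orb"
    and x'_in: "(0, \<chi> k a. if k = ix 0 then 1 else 0) \<in> Orb"
    and q_smooth: "\<And>i n. n \<le> N \<Longrightarrow> smooth_on Orb (q i n)"
    and q_def: "\<And>a x l. x \<in> Orb \<Longrightarrow> l \<le> N \<Longrightarrow>
        bcoord ix a l x =
        fps_nth (fps_exponential (Abs_fps (\<lambda>n. if n \<le> N then
                   (1/2) * (\<Sum>i\<in>UNIV. A a i * q i n x) else 0))) l"
  shows
    "(\<forall>x\<in>Orb. \<forall>c d :: 'r \<Rightarrow> nat \<Rightarrow> real.
        (\<forall>v. (\<Sum>i\<in>UNIV. \<Sum>n\<le>N. c i n * frechet_derivative (ycoord ix i n) (at x) v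
                                + d i n * frechet_derivative (q i n) (at x) v) = 0)
        \<longrightarrow> (\<forall>i. \<forall>n\<le>N. c i n = 0 \<and> d i n = 0))
     \<and> (\<exists>\<Phi> :: ('r, 'k) pt \<Rightarrow> ('r, 'k) pt.
          (\<forall>i. \<forall>k\<le>N. smooth_on UNIV (ycoord ix i k \<circ> \<Phi>) \<and> smooth_on UNIV (bcoord ix i k \<circ> \<Phi>))
          \<and> (\<forall>x\<in>Orb. \<Phi> (\<chi> k i. ycoord ix i (inv_into {..N} ix k) x,
                        \<chi> k i. q i (inv_into {..N} ix k) x) = x))
     \<and> (\<forall>i j. \<forall>m\<le>N. \<forall>n\<le>N. \<forall>x\<in>Orb.
          pbR N ix A (ycoord ix i m) (ycoord ix j n) x = 0
          \<and> pbR N ix A (q i m) (q j n) x = 0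
          \<and> pbR N ix A (ycoord ix i m) (q j n) x
              = (if i = j \<and> m + n = N then 1 else 0))"
proof -
  interpret exp_coordinates N ix A Orb q
  proof
    show "q i n differentiable_on Orb" if "n \<le> N" for i n
      using q_smooth[OF that] by (cases rule: smooth_on.cases) auto
  qed (use ix A_inv O_open q_def in \<open>simp_all add: pairing_series_def\<close>)
  show ?thesis
    using ycoord_q_independent pbR_ycoord_ycoord pbR_q_q pbR_ycoord_q
      smooth_on_ycoord_exp_chart smooth_on_bcoord_exp_chart exp_chart_inverse
    by (auto intro!: exI[of _ "exp_chart N ix A"])
qed

end
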